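(* Let $r>0$, and let $(X_i,x_i,d_i)_{i\in\mathbb{Z}^+}$ be pointed metric spaces. Suppose that for each $i$ the $r$-neighborhood $U_i=\{y\in X_i: d_i(y,x_i)<r\}$ admits a strong deformation contraction $R_i$ to $x_i$, where $U_i$ is equipped with the restricted metric $d_i$. Then for every pointed compact space $(K,k_0)$, the natural continuous bijection $\bigvee_{\mathbb{Z}^+}X_i\to\bigvee^m_{\mathbb{Z}^+}X_i$ induces a bijection between the sets of pointed homotopy classes of pointed maps $[K,\bigvee_{\mathbb{Z}^+}X_i]$ and $[K,\bigvee^m_{\mathbb{Z}^+}X_i]$.
   Context: Let $I=[0,1]$. A strong deformation contraction of a pointed metric space $(X,x_0,d)$ to $x_0$ is a continuous map $H\colon X\times I\to X$ such that: (1) $H(x,0)=x$ for all $x$; (2) $H(X\times\{1\})=H(\{x_0\}\times I)=\{x_0\}$; (3) $d(H(x,t),H(y,t))\le d(x,y)$ for all $x,y\in X$ and all $t\in I$. The weak wedge $\bigvee_{\mathbb{Z}^+}X_i$ is the quotient space of the disjoint union of the $X_i$ obtained by identifying all the points $x_i$. It is based at the wedge point. The metric wedge $\bigvee^m_{\mathbb{Z}^+}X_i$ is the same set, based at the wedge point, with the metric $d_\vee$ given by: - $d_\vee(x,y)=d_j(x,y)$ if $x,y\in X_j$ for some $j$; - $d_\vee(x,y)=d_j(x,x_j)+d_k(y,x_k)$ if $x\in X_j$, $y\in X_k$ with $j\ne k$. *)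

theory Defs
  imports "HOL-Analysis.Analysis"
begin

definition strong_deformation_contraction ::
  "'a metric \<Rightarrow> 'a \<Rightarrow> ('a \<times> real \<Rightarrow> 'a) \<Rightarrow> bool" where
  "strong_deformation_contraction m x0 H \<longleftrightarrow>
     continuous_map (prod_topology (mtopology_of m) (top_of_set {0..1})) (mtopology_of m) H \<and>
     (\<forall>x\<in>mspace m. H (x, 0) = x) \<and>
     H ` (mspace m \<times> {1}) = {x0} \<and>
     H ` ({x0} \<times> {0..1}) = {x0} \<and>
     (\<forall>x\<in>mspace m. \<forall>y\<in>mspace m. \<forall>t\<in>{0..1}. mdist m (H (x, t)) (H (y, t)) \<le> mdist m x y)"

text \<open>Wedge of the family (m i, x0 i), i :: nat.  The wedge point is None; every other
  point of the i-th summand x is Some (i, x).\<close>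
definition wedge_carrier :: "(nat \<Rightarrow> 'a metric) \<Rightarrow> (nat \<Rightarrow> 'a) \<Rightarrow> (nat \<times> 'a) option set" where
  "wedge_carrier m x0 = insert None {Some (i, x) | i x. x \<in> mspace (m i) \<and> x \<noteq> x0 i}"

definition wedge_inj :: "(nat \<Rightarrow> 'a) \<Rightarrow> nat \<Rightarrow> 'a \<Rightarrow> (nat \<times> 'a) option" where
  "wedge_inj x0 i x = (if x = x0 i then None else Some (i, x))"

text \<open>Weak wedge: quotient topology of the disjoint union (a set is open iff its preimage in
  every summand is open).\<close>
definition weak_wedge :: "(nat \<Rightarrow> 'a metric) \<Rightarrow> (nat \<Rightarrow> 'a) \<Rightarrow> (nat \<times> 'a) option topology" where
  "weak_wedge m x0 = topology (\<lambda>U. U \<subseteq> wedge_carrier m x0 \<and>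
      (\<forall>i. openin (mtopology_of (m i)) {x \<in> mspace (m i). wedge_inj x0 i x \<in> U}))"

definition wedge_dist :: "(nat \<Rightarrow> 'a metric) \<Rightarrow> (nat \<Rightarrow> 'a) \<Rightarrow>
    (nat \<times> 'a) option \<Rightarrow> (nat \<times> 'a) option \<Rightarrow> real" where
  "wedge_dist m x0 p q =
     (case (p, q) of
        (None, None) \<Rightarrow> 0
      | (None, Some (k, y)) \<Rightarrow> mdist (m k) (x0 k) y
      | (Some (j, x), None) \<Rightarrow> mdist (m j) x (x0 j)
      | (Some (j, x), Some (k, y)) \<Rightarrow>
          (if j = k then mdist (m j) x y else mdist (m j) x (x0 j) + mdist (m k) y (x0 k)))"

definition metric_wedge :: "(nat \<Rightarrow> 'a metric) \<Rightarrow> (nat \<Rightarrow> 'a) \<Rightarrow> (nat \<times> 'a) option metric" where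
  "metric_wedge m x0 = metric (wedge_carrier m x0, wedge_dist m x0)"

definition pointed_maps :: "'b topology \<Rightarrow> 'b \<Rightarrow> 'c topology \<Rightarrow> 'c \<Rightarrow> ('b \<Rightarrow> 'c) set" where
  "pointed_maps K k0 X x0 = {f. continuous_map K X f \<and> f k0 = x0}"

definition pointed_homotopic :: "'b topology \<Rightarrow> 'b \<Rightarrow> 'c topology \<Rightarrow> 'c \<Rightarrow> ('b \<Rightarrow> 'c) \<Rightarrow> ('b \<Rightarrow> 'c) \<Rightarrow> bool" where
  "pointed_homotopic K k0 X x0 f g = homotopic_with (\<lambda>h. h k0 = x0) K X f g"

definition pointed_homotopy_classes :: "'b topology \<Rightarrow> 'b \<Rightarrow> 'c topology \<Rightarrow> 'c \<Rightarrow> ('b \<Rightarrow> 'c) set set" where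
  "pointed_homotopy_classes K k0 X x0 =
     pointed_maps K k0 X x0 //
       {(f, g). f \<in> pointed_maps K k0 X x0 \<and> g \<in> pointed_maps K k0 X x0 \<and> pointed_homotopic K k0 X x0 f g}"

definition induced_on_classes :: "'b topology \<Rightarrow> 'b \<Rightarrow> 'd topology \<Rightarrow> 'd \<Rightarrow> ('c \<Rightarrow> 'd) \<Rightarrow> ('b \<Rightarrow> 'c) set \<Rightarrow> ('b \<Rightarrow> 'd) set" where
  "induced_on_classes K k0 Y y0 phi C =
     {g \<in> pointed_maps K k0 Y y0. \<exists>f\<in>C. pointed_homotopic K k0 Y y0 (phi \<circ> f) g}"

end

theory Submission
  imports Defs
begin

text \<open>Each summand embeds isometrically into the metric wedge, so the identity from the weak to
  the metric wedge is continuous. Conversely, on a union of finitely many summands the two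
  topologies agree. A compact subset of the weak wedge meets only finitely many summands, and a
  compact subset of the metric wedge lies, outside finitely many summands, within the
  \<open>r\<close>-neighbourhoods \<open>U\<^sub>i\<close> of the base points. So given a map or a homotopy from a compact space
  into the metric wedge, the contractions \<open>R\<^sub>i\<close> of all remaining summands push it into finitely
  many summands. Because the \<open>R\<^sub>i\<close> are nonexpansive and fix the base points, this push is jointly
  continuous for the metric wedge topology, and it fixes maps that already live in the finitely
  many summands. This yields surjectivity and injectivity on pointed homotopy classes.\<close>

section \<open>Metric spaces\<close>

lemma mdist_self [simp]: "x \<in> mspace M \<Longrightarrow> mdist M x x = 0"
  by simp

lemma openin_mball_of [simp]: "openin (mtopology_of M) (mball_of M x e)"
  by (simp add: mtopology_of_def mball_of_def Metric_space.openin_mball)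

lemma openin_mtopology_of:
  "openin (mtopology_of M) U \<longleftrightarrow> U \<subseteq> mspace M \<and> (\<forall>x\<in>U. \<exists>e>0. mball_of M x e \<subseteq> U)"
  by (simp add: mtopology_of_def mball_of_def Metric_space.openin_mtopology Ball_def)

lemma continuous_map_to_mtopology_of:
  "continuous_map X (mtopology_of M) f \<longleftrightarrow>
    (\<forall>x\<in>topspace X. \<forall>e>0. \<exists>U. openin X U \<and> x \<in> U \<and> (\<forall>y\<in>U. f y \<in> mball_of M (f x) e))"
  by (simp add: mtopology_of_def mball_of_def Metric_space.continuous_map_to_metric)

lemma finite_separated_Int_mball_of:
  assumes sep: "\<And>x y. x \<in> D \<Longrightarrow> y \<in> D \<Longrightarrow> x \<noteq> y \<Longrightarrow> 2 * e \<le> mdist M x y"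
  shows "finite (D \<inter> mball_of M c e)"
proof -
  have single: "x = y" if "x \<in> D \<inter> mball_of M c e" "y \<in> D \<inter> mball_of M c e" for x y
  proof (rule ccontr)
    assume "x \<noteq> y"
    have "mdist M x y \<le> mdist M c x + mdist M c y"
      using that mdist_triangle[of x M c y] by (simp add: mdist_commute)
    also have "\<dots> < 2 * e"
      using that by simp
    finally show False
      using sep that \<open>x \<noteq> y\<close> by force
  qed
  show ?thesis
  proof (cases "D \<inter> mball_of M c e = {}")
    case False
    then obtain x where "x \<in> D \<inter> mball_of M c e"
      by blast
    then have "D \<inter> mball_of M c e \<subseteq> {x}"
      using single by blast
    then show ?thesis
      by (rule finite_subset) simp
  qed simp
qed

lemma finite_separated_subset_compactin:
  assumes S: "compactin (mtopology_of M) S" and "D \<subseteq> S" and e: "e > 0"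
    and sep: "\<And>x y. x \<in> D \<Longrightarrow> y \<in> D \<Longrightarrow> x \<noteq> y \<Longrightarrow> 2 * e \<le> mdist M x y"
  shows "finite D"
proof -
  have "Metric_space.mtotally_bounded (mspace M) (mdist M) S"
    using S Metric_space.compactin_imp_mtotally_bounded[OF Metric_space_mspace_mdist]
    by (simp add: mtopology_of_def)
  then obtain F where "finite F" and cover: "S \<subseteq> (\<Union>c\<in>F. mball_of M c e)"
    using e unfolding Metric_space.mtotally_bounded_def[OF Metric_space_mspace_mdist] mball_of_def
    by blast
  have "finite (\<Union>c\<in>F. D \<inter> mball_of M c e)"
    using \<open>finite F\<close> finite_separated_Int_mball_of[OF sep] by (intro finite_UN_I)
  moreover have "D \<subseteq> (\<Union>c\<in>F. D \<inter> mball_of M c e)"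
    using cover \<open>D \<subseteq> S\<close> by blast
  ultimately show ?thesis
    by (rule finite_subset[rotated])
qed

lemma continuous_map_nonexpansive_family:
  assumes cont: "\<And>p. p \<in> S \<Longrightarrow> continuous_map Y (mtopology_of M') (\<lambda>t. F t p)"
    and nonexp: "\<And>t p q. t \<in> topspace Y \<Longrightarrow> p \<in> S \<Longrightarrow> q \<in> S \<Longrightarrow> mdist M' (F t p) (F t q) \<le> mdist M p q"
  shows "continuous_map (prod_topology Y (subtopology (mtopology_of M) S)) (mtopology_of M')
           (\<lambda>(t, p). F t p)"
  unfolding continuous_map_to_mtopology_of
proof (intro ballI allI impI)
  fix z and e :: real
  assume "z \<in> topspace (prod_topology Y (subtopology (mtopology_of M) S))" and e: "e > 0"
  then obtain t p where z: "z = (t, p)" and t: "t \<in> topspace Y" and p: "p \<in> mspace M" "p \<in> S"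
    by auto
  have Fp: "continuous_map Y (mtopology_of M') (\<lambda>t. F t p)"
    using cont p by blast
  define U where "U = {t' \<in> topspace Y. F t' p \<in> mball_of M' (F t p) (e/2)}"
  define V where "V = S \<inter> mball_of M p (e/2)"
  have "openin Y U"
    unfolding U_def by (rule openin_continuous_map_preimage[OF Fp openin_mball_of])
  moreover have "openin (subtopology (mtopology_of M) S) V"
    unfolding V_def by (rule openin_subtopology_Int2[OF openin_mball_of])
  ultimately have "openin (prod_topology Y (subtopology (mtopology_of M) S)) (U \<times> V)"
    by (simp add: openin_prod_Times_iff)
  moreover have "(t, p) \<in> U \<times> V"
    using t p e continuous_map_funspace[OF Fp] by (auto simp: U_def V_def Pi_iff)
  moreover have "\<forall>y\<in>U \<times> V. (\<lambda>(t, p). F t p) y \<in> mball_of M' (F t p) e"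
  proof clarify
    fix t' p' assume "t' \<in> U" "p' \<in> V"
    then have t': "t' \<in> topspace Y" and p': "p' \<in> S" "mdist M p p' < e/2"
      and close: "F t' p \<in> mball_of M' (F t p) (e/2)"
      by (auto simp: U_def V_def)
    have Ft'p': "F t' p' \<in> mspace M'"
      using continuous_map_funspace[OF cont[OF p'(1)]] t' by auto
    have "mdist M' (F t p) (F t' p') \<le> mdist M' (F t p) (F t' p) + mdist M' (F t' p) (F t' p')"
      using close Ft'p' by (intro mdist_triangle) auto
    also have "\<dots> < e/2 + e/2"
      using close nonexp[OF t' p(2) p'(1)] p'(2) by simp
    finally show "F t' p' \<in> mball_of M' (F t p) e"
      using close Ft'p' by simp
  qed
  ultimately show "\<exists>W. openin (prod_topology Y (subtopology (mtopology_of M) S)) W \<and> z \<in> W \<and>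
      (\<forall>y\<in>W. (\<lambda>(t, p). F t p) y \<in> mball_of M' ((\<lambda>(t, p). F t p) z) e)"
    unfolding z prod.case by blast
qed

section \<open>Pointed homotopy classes\<close>

lemma pointed_homotopic_imp_pointed_maps:
  assumes "pointed_homotopic K k0 X x0 f g"
  shows "f \<in> pointed_maps K k0 X x0" "g \<in> pointed_maps K k0 X x0"
  using homotopic_with_imp_continuous_maps[OF assms[unfolded pointed_homotopic_def]]
    homotopic_with_imp_property[OF assms[unfolded pointed_homotopic_def]]
  by (simp_all add: pointed_maps_def)

lemma pointed_homotopic_refl:
  "f \<in> pointed_maps K k0 X x0 \<Longrightarrow> pointed_homotopic K k0 X x0 f f"
  by (simp add: pointed_homotopic_def pointed_maps_def)

lemma pointed_homotopic_sym:
  "pointed_homotopic K k0 X x0 f g \<Longrightarrow> pointed_homotopic K k0 X x0 g f"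
  by (simp add: pointed_homotopic_def homotopic_with_sym)

lemma pointed_homotopic_trans:
  "pointed_homotopic K k0 X x0 f g \<Longrightarrow> pointed_homotopic K k0 X x0 g h \<Longrightarrow>
    pointed_homotopic K k0 X x0 f h"
  unfolding pointed_homotopic_def by (rule homotopic_with_trans)

lemma pointed_homotopy_classes_eq:
  "pointed_homotopy_classes K k0 X x0 =
    (\<lambda>f. Collect (pointed_homotopic K k0 X x0 f)) ` pointed_maps K k0 X x0"
proof -
  have "{(f, g). f \<in> pointed_maps K k0 X x0 \<and> g \<in> pointed_maps K k0 X x0 \<and>
      pointed_homotopic K k0 X x0 f g} `` {f} = Collect (pointed_homotopic K k0 X x0 f)"
    if "f \<in> pointed_maps K k0 X x0" for f
    using that pointed_homotopic_imp_pointed_maps by auto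
  then show ?thesis
    unfolding pointed_homotopy_classes_def quotient_def UNION_singleton_eq_range
    by (intro image_cong) simp_all
qed

lemma pointed_homotopic_class_eq_iff:
  assumes "f \<in> pointed_maps K k0 X x0"
  shows "Collect (pointed_homotopic K k0 X x0 f) = Collect (pointed_homotopic K k0 X x0 g) \<longleftrightarrow>
    pointed_homotopic K k0 X x0 f g"
proof
  assume "Collect (pointed_homotopic K k0 X x0 f) = Collect (pointed_homotopic K k0 X x0 g)"
  then show "pointed_homotopic K k0 X x0 f g"
    using pointed_homotopic_refl[OF assms] by (metis mem_Collect_eq pointed_homotopic_sym)
next
  assume "pointed_homotopic K k0 X x0 f g"
  then show "Collect (pointed_homotopic K k0 X x0 f) = Collect (pointed_homotopic K k0 X x0 g)"
    by (intro Collect_cong) (meson pointed_homotopic_sym pointed_homotopic_trans)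
qed

lemma induced_on_class:
  assumes \<phi>: "continuous_map X Y \<phi>" "\<phi> x0 = y0" and f: "f \<in> pointed_maps K k0 X x0"
  shows "induced_on_classes K k0 Y y0 \<phi> (Collect (pointed_homotopic K k0 X x0 f)) =
    Collect (pointed_homotopic K k0 Y y0 (\<phi> \<circ> f))"
proof (intro set_eqI iffI)
  fix g assume "g \<in> induced_on_classes K k0 Y y0 \<phi> (Collect (pointed_homotopic K k0 X x0 f))"
  then obtain f' where "pointed_homotopic K k0 X x0 f f'" "pointed_homotopic K k0 Y y0 (\<phi> \<circ> f') g"
    unfolding induced_on_classes_def by blast
  moreover have "pointed_homotopic K k0 Y y0 (\<phi> \<circ> f) (\<phi> \<circ> f')"
    unfolding pointed_homotopic_def
    by (rule homotopic_with_compose_continuous_map_left[OF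
          \<open>pointed_homotopic K k0 X x0 f f'\<close>[unfolded pointed_homotopic_def] \<phi>(1)])
      (simp add: \<phi>(2))
  ultimately show "g \<in> Collect (pointed_homotopic K k0 Y y0 (\<phi> \<circ> f))"
    using pointed_homotopic_trans by (metis mem_Collect_eq)
next
  fix g assume "g \<in> Collect (pointed_homotopic K k0 Y y0 (\<phi> \<circ> f))"
  then have "pointed_homotopic K k0 Y y0 (\<phi> \<circ> f) g"
    by simp
  then show "g \<in> induced_on_classes K k0 Y y0 \<phi> (Collect (pointed_homotopic K k0 X x0 f))"
    unfolding induced_on_classes_def
    using pointed_homotopic_imp_pointed_maps(2) pointed_homotopic_refl[OF f] by auto
qed

lemma pointed_maps_compose:
  "continuous_map X Y \<phi> \<Longrightarrow> \<phi> x0 = y0 \<Longrightarrow> f \<in> pointed_maps K k0 X x0 \<Longrightarrow>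
    \<phi> \<circ> f \<in> pointed_maps K k0 Y y0"
  using continuous_map_compose[of K X f Y \<phi>] by (simp add: pointed_maps_def)

lemma inj_on_induced_on_classes:
  assumes \<phi>: "continuous_map X Y \<phi>" "\<phi> x0 = y0"
    and inj: "\<And>f g. f \<in> pointed_maps K k0 X x0 \<Longrightarrow> g \<in> pointed_maps K k0 X x0 \<Longrightarrow>
      pointed_homotopic K k0 Y y0 (\<phi> \<circ> f) (\<phi> \<circ> g) \<Longrightarrow> pointed_homotopic K k0 X x0 f g"
  shows "inj_on (induced_on_classes K k0 Y y0 \<phi>) (pointed_homotopy_classes K k0 X x0)"
  unfolding pointed_homotopy_classes_eq
proof (rule inj_onI)
  let ?cls = "\<lambda>X x0 f. Collect (pointed_homotopic K k0 X x0 f)"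
  fix A B
  assume "A \<in> ?cls X x0 ` pointed_maps K k0 X x0" "B \<in> ?cls X x0 ` pointed_maps K k0 X x0"
    and eq: "induced_on_classes K k0 Y y0 \<phi> A = induced_on_classes K k0 Y y0 \<phi> B"
  then obtain f g where f: "f \<in> pointed_maps K k0 X x0" "A = ?cls X x0 f"
    and g: "g \<in> pointed_maps K k0 X x0" "B = ?cls X x0 g"
    by blast
  have "?cls Y y0 (\<phi> \<circ> f) = ?cls Y y0 (\<phi> \<circ> g)"
    using eq f g by (simp add: induced_on_class[OF \<phi>])
  then have "pointed_homotopic K k0 Y y0 (\<phi> \<circ> f) (\<phi> \<circ> g)"
    by (simp add: pointed_homotopic_class_eq_iff[OF pointed_maps_compose[OF \<phi> f(1)]])
  then show "A = B"
    using f g inj by (simp add: pointed_homotopic_class_eq_iff)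
qed

lemma image_induced_on_classes:
  assumes \<phi>: "continuous_map X Y \<phi>" "\<phi> x0 = y0"
    and surj: "\<And>g. g \<in> pointed_maps K k0 Y y0 \<Longrightarrow>
      \<exists>f\<in>pointed_maps K k0 X x0. pointed_homotopic K k0 Y y0 (\<phi> \<circ> f) g"
  shows "induced_on_classes K k0 Y y0 \<phi> ` pointed_homotopy_classes K k0 X x0 =
    pointed_homotopy_classes K k0 Y y0"
proof -
  let ?cls = "\<lambda>f. Collect (pointed_homotopic K k0 Y y0 f)"
  have "induced_on_classes K k0 Y y0 \<phi> ` pointed_homotopy_classes K k0 X x0 =
      (\<lambda>f. ?cls (\<phi> \<circ> f)) ` pointed_maps K k0 X x0"
    unfolding pointed_homotopy_classes_eq image_image
    by (intro image_cong) (simp_all add: induced_on_class[OF \<phi>])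
  also have "\<dots> = ?cls ` pointed_maps K k0 Y y0"
  proof
    show "(\<lambda>f. ?cls (\<phi> \<circ> f)) ` pointed_maps K k0 X x0 \<subseteq> ?cls ` pointed_maps K k0 Y y0"
      by (intro image_subsetI imageI pointed_maps_compose[OF \<phi>])
  next
    show "?cls ` pointed_maps K k0 Y y0 \<subseteq> (\<lambda>f. ?cls (\<phi> \<circ> f)) ` pointed_maps K k0 X x0"
    proof
      fix A assume "A \<in> ?cls ` pointed_maps K k0 Y y0"
      then obtain g where g: "g \<in> pointed_maps K k0 Y y0" "A = ?cls g"
        by blast
      then obtain f where f: "f \<in> pointed_maps K k0 X x0" "pointed_homotopic K k0 Y y0 (\<phi> \<circ> f) g"
        using surj by blast
      then have "?cls (\<phi> \<circ> f) = A"
        using g pointed_homotopic_class_eq_iff[OF pointed_maps_compose[OF \<phi> f(1)]] by simp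
      then show "A \<in> (\<lambda>f. ?cls (\<phi> \<circ> f)) ` pointed_maps K k0 X x0"
        using f(1) by blast
    qed
  qed
  finally show ?thesis
    unfolding pointed_homotopy_classes_eq[of K k0 Y y0] .
qed

lemma bij_betw_induced_on_classes:
  assumes "continuous_map X Y \<phi>" "\<phi> x0 = y0"
    and "\<And>g. g \<in> pointed_maps K k0 Y y0 \<Longrightarrow>
      \<exists>f\<in>pointed_maps K k0 X x0. pointed_homotopic K k0 Y y0 (\<phi> \<circ> f) g"
    and "\<And>f g. f \<in> pointed_maps K k0 X x0 \<Longrightarrow> g \<in> pointed_maps K k0 X x0 \<Longrightarrow>
      pointed_homotopic K k0 Y y0 (\<phi> \<circ> f) (\<phi> \<circ> g) \<Longrightarrow> pointed_homotopic K k0 X x0 f g"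
  shows "bij_betw (induced_on_classes K k0 Y y0 \<phi>)
    (pointed_homotopy_classes K k0 X x0) (pointed_homotopy_classes K k0 Y y0)"
  unfolding bij_betw_def
  using inj_on_induced_on_classes[OF assms(1,2,4)] image_induced_on_classes[OF assms(1,2,3)] by blast

section \<open>The weak and the metric wedge\<close>

lemma wedge_dist_simps [simp]:
  "wedge_dist m x0 None None = 0"
  "wedge_dist m x0 None (Some (k, y)) = mdist (m k) (x0 k) y"
  "wedge_dist m x0 (Some (j, x)) None = mdist (m j) x (x0 j)"
  "wedge_dist m x0 (Some (j, x)) (Some (k, y)) =
     (if j = k then mdist (m j) x y else mdist (m j) x (x0 j) + mdist (m k) y (x0 k))"
  by (simp_all add: wedge_dist_def)

lemma None_in_wedge_carrier [simp]: "None \<in> wedge_carrier m x0"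
  by (simp add: wedge_carrier_def)

lemma Some_in_wedge_carrier [simp]:
  "Some (i, x) \<in> wedge_carrier m x0 \<longleftrightarrow> x \<in> mspace (m i) \<and> x \<noteq> x0 i"
  by (auto simp: wedge_carrier_def)

lemma Metric_space_wedge:
  assumes x0: "\<And>i. x0 i \<in> mspace (m i)"
  shows "Metric_space (wedge_carrier m x0) (wedge_dist m x0)"
proof
  fix p q
  show "0 \<le> wedge_dist m x0 p q" "wedge_dist m x0 p q = wedge_dist m x0 q p"
    by (auto simp: wedge_dist_def mdist_commute split: option.splits prod.splits)
next
  fix p q assume "p \<in> wedge_carrier m x0" "q \<in> wedge_carrier m x0"
  then show "wedge_dist m x0 p q = 0 \<longleftrightarrow> p = q"
    using x0 by (auto simp: wedge_carrier_def add_nonneg_eq_0_iff split: if_splits)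
next
  fix p q s
  assume "p \<in> wedge_carrier m x0" "q \<in> wedge_carrier m x0" "s \<in> wedge_carrier m x0"
  then show "wedge_dist m x0 p s \<le> wedge_dist m x0 p q + wedge_dist m x0 q s"
    using x0
    by (cases p; cases q; cases s)
      (auto simp: mdist_commute intro: add_increasing2 add_increasing,
       (smt (verit) mdist_triangle mdist_commute mdist_nonneg)+)
qed

definition wedge_part :: "nat set \<Rightarrow> (nat \<times> 'a) option set" where
  "wedge_part N = {p. \<forall>i x. p = Some (i, x) \<longrightarrow> i \<in> N}"

lemma wedge_part_simps [simp]:
  "None \<in> wedge_part N"
  "Some (i, x) \<in> wedge_part N \<longleftrightarrow> i \<in> N"
  by (simp_all add: wedge_part_def)

lemma wedge_inj_base [simp]: "wedge_inj x0 i (x0 i) = None"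
  by (simp add: wedge_inj_def)

lemma wedge_inj_in_wedge_part [simp]: "i \<in> N \<Longrightarrow> wedge_inj x0 i x \<in> wedge_part N"
  by (simp add: wedge_inj_def)

locale pointed_metric_family =
  fixes m :: "nat \<Rightarrow> 'a metric" and x0 :: "nat \<Rightarrow> 'a"
  assumes base_in_mspace [simp]: "x0 i \<in> mspace (m i)"
begin

abbreviation "wedge \<equiv> wedge_carrier m x0"
abbreviation "wdist \<equiv> wedge_dist m x0"
abbreviation "MW \<equiv> metric_wedge m x0"
abbreviation "WW \<equiv> weak_wedge m x0"

lemma mspace_metric_wedge [simp]: "mspace MW = wedge"
  and mdist_metric_wedge [simp]: "mdist MW = wdist"
  using Metric_space_wedge[OF base_in_mspace]
  by (simp_all add: metric_wedge_def Metric_space.mspace_metric Metric_space.mdist_metric)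

lemma wdist_self [simp]: "p \<in> wedge \<Longrightarrow> wdist p p = 0"
  using mdist_self[of p MW] by simp

lemma wedge_inj_in_wedge [simp]: "x \<in> mspace (m i) \<Longrightarrow> wedge_inj x0 i x \<in> wedge"
  by (simp add: wedge_inj_def)

lemma wdist_wedge_inj [simp]:
  "x \<in> mspace (m i) \<Longrightarrow> y \<in> mspace (m i) \<Longrightarrow>
    wdist (wedge_inj x0 i x) (wedge_inj x0 i y) = mdist (m i) x y"
  by (auto simp: wedge_inj_def mdist_commute)

lemma wdist_wedge_inj_distinct:
  "i \<noteq> j \<Longrightarrow> x \<in> mspace (m i) \<Longrightarrow> y \<in> mspace (m j) \<Longrightarrow>
    wdist (wedge_inj x0 i x) (wedge_inj x0 j y) = mdist (m i) (x0 i) x + mdist (m j) (x0 j) y"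
  by (auto simp: wedge_inj_def mdist_commute)

lemma continuous_map_wedge_inj:
  "continuous_map (mtopology_of (m i)) (mtopology_of MW) (wedge_inj x0 i)"
  by (intro Lipschitz_continuous_imp_continuous_map)
    (auto simp: Lipschitz_continuous_map_def intro!: exI[of _ 1])

lemma openin_weak_wedge:
  "openin WW U \<longleftrightarrow>
    U \<subseteq> wedge \<and> (\<forall>i. openin (mtopology_of (m i)) {x \<in> mspace (m i). wedge_inj x0 i x \<in> U})"
proof -
  let ?pre = "\<lambda>i U. {x \<in> mspace (m i). wedge_inj x0 i x \<in> U}"
  have "istopology (\<lambda>U. U \<subseteq> wedge \<and> (\<forall>i. openin (mtopology_of (m i)) (?pre i U)))"
    unfolding istopology_def
  proof (rule conjI; intro allI impI)
    fix S U
    assume "S \<subseteq> wedge \<and> (\<forall>i. openin (mtopology_of (m i)) (?pre i S))"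
      and "U \<subseteq> wedge \<and> (\<forall>i. openin (mtopology_of (m i)) (?pre i U))"
    moreover have "?pre i (S \<inter> U) = ?pre i S \<inter> ?pre i U" for i
      by blast
    ultimately show "S \<inter> U \<subseteq> wedge \<and> (\<forall>i. openin (mtopology_of (m i)) (?pre i (S \<inter> U)))"
      by auto
  next
    fix \<K>
    assume \<K>: "\<forall>U\<in>\<K>. U \<subseteq> wedge \<and> (\<forall>i. openin (mtopology_of (m i)) (?pre i U))"
    moreover have "?pre i (\<Union>\<K>) = (\<Union>U\<in>\<K>. ?pre i U)" for i
      by blast
    ultimately show "\<Union>\<K> \<subseteq> wedge \<and> (\<forall>i. openin (mtopology_of (m i)) (?pre i (\<Union>\<K>)))"
      by auto
  qed
  then show ?thesis
    by (simp add: weak_wedge_def)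
qed

lemma topspace_weak_wedge [simp]: "topspace WW = wedge"
proof -
  have "{x \<in> mspace (m i). wedge_inj x0 i x \<in> wedge} = topspace (mtopology_of (m i))" for i
    by auto
  then have "openin WW wedge"
    unfolding openin_weak_wedge by (metis openin_topspace order_refl)
  then show ?thesis
    using openin_subset[of WW] openin_topspace[of WW] openin_weak_wedge by blast
qed

lemma continuous_map_weak_wedge_id: "continuous_map WW (mtopology_of MW) id"
  unfolding continuous_map_def
proof (intro conjI allI impI)
  fix U assume U: "openin (mtopology_of MW) U"
  have "openin (mtopology_of (m i)) {x \<in> mspace (m i). wedge_inj x0 i x \<in> U}" for i
    using openin_continuous_map_preimage[OF continuous_map_wedge_inj U] by simp
  moreover have "U \<subseteq> wedge"
    using openin_subset[OF U] by simp
  ultimately show "openin WW {x \<in> topspace WW. id x \<in> U}"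
    by (simp add: openin_weak_wedge Int_absorb1 flip: Int_def)
qed simp

lemma closedin_weak_wedge_sparse:
  assumes "A \<subseteq> wedge" "None \<notin> A" and fin: "\<And>i. finite {x. Some (i, x) \<in> A}"
  shows "closedin WW A"
proof -
  have "openin (mtopology_of (m i)) {x \<in> mspace (m i). wedge_inj x0 i x \<in> wedge - A}" for i
  proof -
    have eq: "{x \<in> mspace (m i). wedge_inj x0 i x \<in> wedge - A} =
        topspace (mtopology_of (m i)) - {x. Some (i, x) \<in> A}"
      using assms(1,2) by (auto simp: wedge_inj_def)
    have "t1_space (mtopology_of (m i))"
      by (simp add: mtopology_of_def Metric_space.Hausdorff_space_mtopology Hausdorff_imp_t1_space)
    moreover have "{x. Some (i, x) \<in> A} \<subseteq> mspace (m i)"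
      using assms(1) by auto
    ultimately have "closedin (mtopology_of (m i)) {x. Some (i, x) \<in> A}"
      using fin by (simp add: t1_space_closedin_finite)
    then show ?thesis
      unfolding eq by (intro openin_diff openin_topspace)
  qed
  then show ?thesis
    using assms(1) by (simp add: closedin_def openin_weak_wedge)
qed

lemma weak_wedge_derived_set_of_sparse:
  assumes D: "D \<subseteq> wedge" "None \<notin> D" and sparse: "\<And>i. \<exists>a. {x. Some (i, x) \<in> D} \<subseteq> {a}"
  shows "WW derived_set_of D = {}"
proof -
  have "p \<notin> WW derived_set_of D" for p
  proof
    have "finite {x. Some (i, x) \<in> D - {p}}" for i
      using sparse[of i] by (metis (no_types, lifting) Collect_mono Diff_iff finite.simps finite_subset)
    then have "closedin WW (D - {p})"
      using D by (intro closedin_weak_wedge_sparse) auto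
    then have open_complement: "openin WW (wedge - (D - {p}))"
      by (simp add: closedin_def)
    assume "p \<in> WW derived_set_of D"
    then have "p \<in> wedge - (D - {p})" "\<forall>T. p \<in> T \<and> openin WW T \<longrightarrow> (\<exists>z\<noteq>p. z \<in> D \<and> z \<in> T)"
      unfolding in_derived_set_of by auto
    then obtain z where "z \<noteq> p" "z \<in> D" "z \<in> wedge - (D - {p})"
      using open_complement by metis
    then show False
      by simp
  qed
  then show ?thesis
    by blast
qed

lemma compactin_weak_wedge_finite_summands:
  assumes S: "compactin WW S"
  shows "\<exists>N. finite N \<and> S \<subseteq> wedge_part N"
proof -
  let ?I = "{i. \<exists>x. Some (i, x) \<in> S}"
  obtain y where y: "\<forall>i\<in>?I. Some (i, y i) \<in> S"
    using bchoice[of ?I "\<lambda>i x. Some (i, x) \<in> S"] by blast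
  define D where "D = (\<lambda>i. Some (i, y i)) ` ?I"
  have "D \<subseteq> S"
    using y by (auto simp: D_def)
  moreover have "WW derived_set_of D = {}"
  proof (rule weak_wedge_derived_set_of_sparse)
    show "D \<subseteq> wedge"
      using compactin_subset_topspace[OF S] \<open>D \<subseteq> S\<close> by simp
    show "None \<notin> D" "\<exists>a. {x. Some (i, x) \<in> D} \<subseteq> {a}" for i
      by (auto simp: D_def)
  qed
  ultimately have "finite D"
    using compactin_imp_Bolzano_Weierstrass[OF S, of D] by blast
  moreover have "inj_on (\<lambda>i. Some (i, y i)) ?I"
    by (rule inj_onI) simp
  ultimately have "finite ?I"
    unfolding D_def using finite_imageD by blast
  moreover have "S \<subseteq> wedge_part ?I"
    by (auto simp: wedge_part_def)
  ultimately show ?thesis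
    by blast
qed

lemma compactin_metric_wedge_finite_far_summands:
  assumes S: "compactin (mtopology_of MW) S" and r: "r > 0"
  shows "finite {i. \<exists>x. Some (i, x) \<in> S \<and> r \<le> mdist (m i) (x0 i) x}" (is "finite ?I")
proof -
  obtain y where y: "\<forall>i\<in>?I. Some (i, y i) \<in> S \<and> r \<le> mdist (m i) (x0 i) (y i)"
    using bchoice[of ?I "\<lambda>i x. Some (i, x) \<in> S \<and> r \<le> mdist (m i) (x0 i) x"] by blast
  define D where "D = (\<lambda>i. Some (i, y i)) ` ?I"
  have "D \<subseteq> S"
    using y by (auto simp: D_def)
  moreover have "2 * r \<le> wdist p q" if "p \<in> D" "q \<in> D" "p \<noteq> q" for p q
  proof -
    obtain i j where "i \<in> ?I" "j \<in> ?I" "p = Some (i, y i)" "q = Some (j, y j)"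
      using \<open>p \<in> D\<close> \<open>q \<in> D\<close> by (auto simp: D_def)
    moreover from this \<open>p \<noteq> q\<close> have "i \<noteq> j"
      by blast
    ultimately have "wdist p q = mdist (m i) (x0 i) (y i) + mdist (m j) (x0 j) (y j)"
      by (simp add: mdist_commute)
    moreover have "r \<le> mdist (m i) (x0 i) (y i)" "r \<le> mdist (m j) (x0 j) (y j)"
      using y \<open>i \<in> ?I\<close> \<open>j \<in> ?I\<close> by blast+
    ultimately show ?thesis
      by linarith
  qed
  ultimately have "finite D"
    using finite_separated_subset_compactin[OF S _ r] by simp
  moreover have "inj_on (\<lambda>i. Some (i, y i)) ?I"
    by (rule inj_onI) simp
  ultimately show ?thesis
    unfolding D_def using finite_imageD by blast
qed

lemma wdist_less_imp_same_summand:
  assumes "Some (j, x) \<in> wedge" "q \<in> wedge" "wdist (Some (j, x)) q < mdist (m j) x (x0 j)"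
  shows "\<exists>y. q = Some (j, y)"
  using assms by (cases q) (auto split: if_splits simp: mdist_nonneg[THEN leD])

lemma openin_weak_wedge_contains_mball_Some:
  assumes U: "openin WW U" and p: "Some (j, x) \<in> U"
  shows "\<exists>e>0. mball_of MW (Some (j, x)) e \<subseteq> U"
proof -
  have x: "x \<in> mspace (m j)" "x \<noteq> x0 j"
    using openin_subset[OF U] p by auto
  then have "x \<in> {y \<in> mspace (m j). wedge_inj x0 j y \<in> U}"
    using p by (simp add: wedge_inj_def)
  moreover have "openin (mtopology_of (m j)) {y \<in> mspace (m j). wedge_inj x0 j y \<in> U}"
    using U by (simp add: openin_weak_wedge)
  ultimately obtain e where e: "e > 0" "mball_of (m j) x e \<subseteq> {y \<in> mspace (m j). wedge_inj x0 j y \<in> U}"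
    unfolding openin_mtopology_of by blast
  have "mdist (m j) x (x0 j) > 0"
    using x by (simp add: order_le_neq_trans)
  moreover have "q \<in> U" if q: "q \<in> mball_of MW (Some (j, x)) (min e (mdist (m j) x (x0 j)))" for q
  proof -
    obtain y where y: "q = Some (j, y)"
      using wdist_less_imp_same_summand[of j x q] q by auto
    then have "y \<in> mball_of (m j) x e" "y \<noteq> x0 j"
      using q by auto
    then have "wedge_inj x0 j y \<in> U"
      using e(2) by blast
    then show "q \<in> U"
      using y \<open>y \<noteq> x0 j\<close> by (simp add: wedge_inj_def)
  qed
  ultimately show ?thesis
    using e(1) by (intro exI[of _ "min e (mdist (m j) x (x0 j))"]) auto
qed

lemma openin_weak_wedge_contains_mball_None:
  assumes U: "openin WW U" and "None \<in> U" and N: "finite N"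
  shows "\<exists>e>0. mball_of MW None e \<inter> wedge_part N \<subseteq> U"
proof -
  have "\<forall>i. \<exists>e>0. mball_of (m i) (x0 i) e \<subseteq> {y \<in> mspace (m i). wedge_inj x0 i y \<in> U}"
    using U \<open>None \<in> U\<close> by (auto simp: openin_weak_wedge openin_mtopology_of wedge_inj_def)
  then obtain e where e: "\<And>i. e i > 0"
    "\<And>i. mball_of (m i) (x0 i) (e i) \<subseteq> {y \<in> mspace (m i). wedge_inj x0 i y \<in> U}"
    by metis
  define \<epsilon> where "\<epsilon> = Min (insert 1 (e ` N))"
  have "\<epsilon> > 0"
    using N e(1) by (simp add: \<epsilon>_def)
  moreover have "q \<in> U" if q: "q \<in> mball_of MW None \<epsilon> \<inter> wedge_part N" for q
  proof (cases q)
    case (Some a)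
    then obtain i y where y: "q = Some (i, y)"
      by (cases a) auto
    with q have "i \<in> N" "y \<noteq> x0 i" "mdist (m i) (x0 i) y < \<epsilon>"
      by auto
    moreover have "\<epsilon> \<le> e i" if "i \<in> N"
      using N that by (simp add: \<epsilon>_def)
    ultimately have "y \<in> mball_of (m i) (x0 i) (e i)"
      using q y by auto
    then have "wedge_inj x0 i y \<in> U"
      using e(2) by blast
    then show "q \<in> U"
      using y \<open>y \<noteq> x0 i\<close> by (simp add: wedge_inj_def)
  qed (simp add: \<open>None \<in> U\<close>)
  ultimately show ?thesis
    by blast
qed

lemma openin_weak_wedge_contains_mball:
  assumes U: "openin WW U" "p \<in> U" and N: "finite N"
  shows "\<exists>e>0. mball_of MW p e \<inter> wedge_part N \<subseteq> U"
proof (cases p)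
  case None
  then show ?thesis
    using openin_weak_wedge_contains_mball_None U N by simp
next
  case (Some a)
  then obtain j x where "p = Some (j, x)"
    by (cases a) auto
  then obtain e where "e > 0" "mball_of MW p e \<subseteq> U"
    using openin_weak_wedge_contains_mball_Some U by blast
  then show ?thesis
    by blast
qed

lemma continuous_map_into_weak_wedge:
  assumes g: "continuous_map Z (mtopology_of MW) g" and N: "finite N"
    and gN: "g ` topspace Z \<subseteq> wedge_part N"
  shows "continuous_map Z WW g"
  unfolding continuous_map_def
proof (intro conjI allI impI)
  show "g \<in> topspace Z \<rightarrow> topspace WW"
    using continuous_map_funspace[OF g] by simp
  fix U assume U: "openin WW U"
  show "openin Z {z \<in> topspace Z. g z \<in> U}"
  proof (subst openin_subopen, intro ballI)
    fix z assume z: "z \<in> {z \<in> topspace Z. g z \<in> U}"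
    obtain e where e: "e > 0" "mball_of MW (g z) e \<inter> wedge_part N \<subseteq> U"
      using openin_weak_wedge_contains_mball[OF U _ N] z by blast
    define V where "V = {y \<in> topspace Z. g y \<in> mball_of MW (g z) e}"
    have "openin Z V"
      unfolding V_def by (rule openin_continuous_map_preimage[OF g openin_mball_of])
    moreover have "z \<in> V"
      using z e(1) continuous_map_funspace[OF g] by (auto simp: V_def Pi_iff)
    moreover have "V \<subseteq> {z \<in> topspace Z. g z \<in> U}"
      unfolding V_def using e(2) gN by blast
    ultimately show "\<exists>V. openin Z V \<and> z \<in> V \<and> V \<subseteq> {z \<in> topspace Z. g z \<in> U}"
      by blast
  qed
qed

end

section \<open>Contracting all but finitely many summands\<close>

locale wedge_contraction = pointed_metric_family +
  fixes r :: real and R :: "nat \<Rightarrow> 'a \<times> real \<Rightarrow> 'a"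
  assumes r_pos: "r > 0"
    and contraction: "\<And>i. strong_deformation_contraction
      (submetric (m i) (mball_of (m i) (x0 i) r)) (x0 i) (R i)"
begin

abbreviation "U i \<equiv> mball_of (m i) (x0 i) r"

lemma continuous_map_contraction:
  "continuous_map (prod_topology (subtopology (mtopology_of (m i)) (U i)) (top_of_set {0..1}))
    (subtopology (mtopology_of (m i)) (U i)) (R i)"
  using contraction[of i] by (simp add: strong_deformation_contraction_def mtopology_of_submetric)

lemma contraction_in_ball: "x \<in> U i \<Longrightarrow> t \<in> {0..1} \<Longrightarrow> R i (x, t) \<in> U i"
  using continuous_map_funspace[OF continuous_map_contraction[of i]] by auto

lemma contraction_in_mspace [simp]: "x \<in> U i \<Longrightarrow> t \<in> {0..1} \<Longrightarrow> R i (x, t) \<in> mspace (m i)"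
  using contraction_in_ball by auto

lemma contraction_start: "x \<in> U i \<Longrightarrow> R i (x, 0) = x"
  using contraction[of i] by (simp add: strong_deformation_contraction_def)

lemma contraction_end: "x \<in> U i \<Longrightarrow> R i (x, 1) = x0 i"
  using contraction[of i] by (auto simp: strong_deformation_contraction_def)

lemma contraction_fixes_base: "t \<in> {0..1} \<Longrightarrow> R i (x0 i, t) = x0 i"
  using contraction[of i] by (auto simp: strong_deformation_contraction_def)

lemma contraction_nonexpansive:
  "x \<in> U i \<Longrightarrow> y \<in> U i \<Longrightarrow> t \<in> {0..1} \<Longrightarrow> mdist (m i) (R i (x, t)) (R i (y, t)) \<le> mdist (m i) x y"
  using contraction[of i] by (simp add: strong_deformation_contraction_def)

lemma continuous_map_contraction_path:
  assumes "x \<in> U i"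
  shows "continuous_map (top_of_set {0..1}) (mtopology_of (m i)) (\<lambda>t. R i (x, t))"
proof -
  have "continuous_map (top_of_set {0..1})
      (prod_topology (subtopology (mtopology_of (m i)) (U i)) (top_of_set {0..1})) (\<lambda>t. (x, t))"
    using assms by (intro continuous_map_pairedI) auto
  from continuous_map_compose[OF this continuous_map_contraction]
  show ?thesis
    by (simp add: o_def continuous_map_in_subtopology)
qed

text \<open>Points outside \<open>U i\<close> are left in place; this choice is immaterial, since
  \<open>contract_outside N\<close> is only ever applied to \<open>contraction_domain N\<close>.\<close>

definition contract_outside :: "nat set \<Rightarrow> real \<Rightarrow> (nat \<times> 'a) option \<Rightarrow> (nat \<times> 'a) option" where
  "contract_outside N t p =
    (case p of
      None \<Rightarrow> None
    | Some (i, x) \<Rightarrow> if i \<in> N \<or> x \<notin> U i then p else wedge_inj x0 i (R i (x, t)))"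

definition contraction_domain :: "nat set \<Rightarrow> (nat \<times> 'a) option set" where
  "contraction_domain N = wedge \<inter> (wedge_part N \<union> mball_of MW None r)"

lemma contract_outside_None [simp]: "contract_outside N t None = None"
  by (simp add: contract_outside_def)

lemma contract_outside_fixes_wedge_part: "p \<in> wedge_part N \<Longrightarrow> contract_outside N t p = p"
  by (auto simp: contract_outside_def wedge_part_def split: option.split)

lemma contract_outside_wedge_inj:
  assumes "x \<in> mspace (m i)" "i \<in> N \<or> x \<in> U i" "t \<in> {0..1}"
  shows "contract_outside N t (wedge_inj x0 i x) = wedge_inj x0 i (if i \<in> N then x else R i (x, t))"
  using assms contraction_fixes_base by (auto simp: contract_outside_def wedge_inj_def)

lemma contraction_domain_cases:
  assumes "p \<in> contraction_domain N"
  obtains i x where "x \<in> mspace (m i)" "i \<in> N \<or> x \<in> U i" "p = wedge_inj x0 i x"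
proof (cases p)
  case None
  then show ?thesis
    using that[of "x0 0" 0] r_pos by simp
next
  case (Some a)
  with assms obtain i x where "p = Some (i, x)" "x \<in> mspace (m i)" "x \<noteq> x0 i" "i \<in> N \<or> x \<in> U i"
    by (cases a) (auto simp: contraction_domain_def)
  then show ?thesis
    using that by (simp add: wedge_inj_def)
qed

lemma contraction_domain_mono: "N \<subseteq> N' \<Longrightarrow> contraction_domain N \<subseteq> contraction_domain N'"
  by (auto simp: contraction_domain_def wedge_part_def)

lemma contract_outside_in_wedge:
  "p \<in> contraction_domain N \<Longrightarrow> t \<in> {0..1} \<Longrightarrow> contract_outside N t p \<in> wedge"
  by (elim contraction_domain_cases) (auto simp: contract_outside_wedge_inj)

lemma contract_outside_0: "p \<in> contraction_domain N \<Longrightarrow> contract_outside N 0 p = p"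
  by (elim contraction_domain_cases) (auto simp: contract_outside_wedge_inj contraction_start)

lemma contract_outside_1: "p \<in> contraction_domain N \<Longrightarrow> contract_outside N 1 p \<in> wedge_part N"
  by (elim contraction_domain_cases) (auto simp: contract_outside_wedge_inj contraction_end)

lemma contract_outside_nonexpansive_summand:
  assumes "x \<in> mspace (m i)" "y \<in> mspace (m i)" "i \<in> N \<or> x \<in> U i" "i \<in> N \<or> y \<in> U i"
    and "t \<in> {0..1}"
  shows "wdist (contract_outside N t (wedge_inj x0 i x)) (contract_outside N t (wedge_inj x0 i y))
    \<le> mdist (m i) x y"
  using assms contraction_nonexpansive by (auto simp: contract_outside_wedge_inj)

lemma contract_outside_nonexpansive:
  assumes p: "p \<in> contraction_domain N" and q: "q \<in> contraction_domain N" and t: "t \<in> {0..1}"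
  shows "wdist (contract_outside N t p) (contract_outside N t q) \<le> wdist p q"
proof -
  obtain i x where x: "x \<in> mspace (m i)" "i \<in> N \<or> x \<in> U i" and p_eq: "p = wedge_inj x0 i x"
    using p by (rule contraction_domain_cases)
  obtain j y where y: "y \<in> mspace (m j)" "j \<in> N \<or> y \<in> U j" and q_eq: "q = wedge_inj x0 j y"
    using q by (rule contraction_domain_cases)
  show ?thesis
  proof (cases "i = j")
    case True
    then show ?thesis
      using contract_outside_nonexpansive_summand[OF x(1) y(1)[unfolded True[symmetric]]] x y t p_eq q_eq
      by simp
  next
    case False
    let ?c = "contract_outside N t"
    have "wdist (?c p) (?c q) \<le> wdist (?c p) None + wdist None (?c q)"
      using mdist_triangle[of "?c p" MW None "?c q"] contract_outside_in_wedge[OF _ t] p q by simp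
    also have "\<dots> \<le> mdist (m i) x (x0 i) + mdist (m j) (x0 j) y"
    proof (intro add_mono)
      show "wdist (?c p) None \<le> mdist (m i) x (x0 i)"
        using contract_outside_nonexpansive_summand[of x i "x0 i"] x t r_pos by (simp add: p_eq)
      show "wdist None (?c q) \<le> mdist (m j) (x0 j) y"
        using contract_outside_nonexpansive_summand[of "x0 j" j y] y t r_pos by (simp add: q_eq)
    qed
    also have "\<dots> = wdist p q"
      using wdist_wedge_inj_distinct[OF False x(1) y(1)] by (simp add: p_eq q_eq mdist_commute)
    finally show ?thesis .
  qed
qed

lemma continuous_map_contract_outside_path:
  assumes "p \<in> contraction_domain N"
  shows "continuous_map (top_of_set {0..1}) (mtopology_of MW) (\<lambda>t. contract_outside N t p)"
proof -
  obtain i x where x: "x \<in> mspace (m i)" "i \<in> N \<or> x \<in> U i" and p_eq: "p = wedge_inj x0 i x"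
    using assms by (rule contraction_domain_cases)
  show ?thesis
  proof (cases "i \<in> N")
    case True
    have "continuous_map (top_of_set {0..1}) (mtopology_of MW) (\<lambda>t. p)"
      using x by (simp add: p_eq)
    then show ?thesis
      by (rule continuous_map_eq) (simp add: p_eq contract_outside_wedge_inj x True)
  next
    case False
    then have "continuous_map (top_of_set {0..1}) (mtopology_of MW) (wedge_inj x0 i \<circ> (\<lambda>t. R i (x, t)))"
      using x by (intro continuous_map_compose[OF continuous_map_contraction_path continuous_map_wedge_inj]) auto
    then show ?thesis
      using x False by (elim continuous_map_eq) (auto simp: p_eq contract_outside_wedge_inj)
  qed
qed

lemma continuous_map_contract_outside:
  "continuous_map (prod_topology (top_of_set {0..1}) (subtopology (mtopology_of MW) (contraction_domain N)))
    (mtopology_of MW) (\<lambda>(t, p). contract_outside N t p)"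
  by (rule continuous_map_nonexpansive_family)
    (simp_all add: continuous_map_contract_outside_path contract_outside_nonexpansive)

lemma compactin_metric_wedge_in_contraction_domain:
  assumes S: "compactin (mtopology_of MW) S"
  shows "\<exists>N. finite N \<and> S \<subseteq> contraction_domain N"
proof -
  let ?N = "{i. \<exists>x. Some (i, x) \<in> S \<and> r \<le> mdist (m i) (x0 i) x}"
  have "S \<subseteq> contraction_domain ?N"
  proof
    fix p assume "p \<in> S"
    moreover have "S \<subseteq> wedge"
      using compactin_subset_topspace[OF S] by simp
    ultimately show "p \<in> contraction_domain ?N"
      by (cases p) (auto simp: contraction_domain_def not_le)
  qed
  then show ?thesis
    using compactin_metric_wedge_finite_far_summands[OF S r_pos] by blast
qed

lemma homotopic_contract_outside:
  "homotopic_with (\<lambda>h. h None = None) (subtopology (mtopology_of MW) (contraction_domain N))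
    (mtopology_of MW) id (contract_outside N 1)"
proof -
  let ?X = "subtopology (mtopology_of MW) (contraction_domain N)"
  have None: "None \<in> topspace ?X"
    by (simp add: contraction_domain_def)
  have "homotopic_with (\<lambda>h. h None = None) ?X (mtopology_of MW) id (contract_outside N 1) \<longleftrightarrow>
      (\<exists>h. continuous_map (prod_topology (top_of_set {0..1::real}) ?X) (mtopology_of MW) h \<and>
        (\<forall>p\<in>topspace ?X. h (0, p) = id p) \<and> (\<forall>p\<in>topspace ?X. h (1, p) = contract_outside N 1 p) \<and>
        (\<forall>t\<in>{0..1}. h (t, None) = None))"
    using None by (intro homotopic_with) metis
  moreover have "continuous_map (prod_topology (top_of_set {0..1}) ?X) (mtopology_of MW)
      (\<lambda>(t, p). contract_outside N t p)"
    by (rule continuous_map_contract_outside)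
  ultimately show ?thesis
    by (auto intro!: exI[of _ "\<lambda>(t, p). contract_outside N t p"] simp: contract_outside_0)
qed

lemma continuous_map_contract_outside_weak_wedge:
  assumes "finite N"
  shows "continuous_map (subtopology (mtopology_of MW) (contraction_domain N)) WW (contract_outside N 1)"
proof (rule continuous_map_into_weak_wedge[OF _ assms])
  show "continuous_map (subtopology (mtopology_of MW) (contraction_domain N)) (mtopology_of MW)
      (contract_outside N 1)"
    using homotopic_with_imp_continuous_maps[OF homotopic_contract_outside] by blast
  show "contract_outside N 1 ` topspace (subtopology (mtopology_of MW) (contraction_domain N)) \<subseteq> wedge_part N"
    using contract_outside_1 by auto
qed

lemma metric_wedge_map_homotopic_to_weak_wedge_map:
  assumes K: "compact_space K" and f: "f \<in> pointed_maps K k0 (mtopology_of MW) None"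
  shows "\<exists>g\<in>pointed_maps K k0 WW None. pointed_homotopic K k0 (mtopology_of MW) None g f"
proof -
  have fc: "continuous_map K (mtopology_of MW) f" and fk0: "f k0 = None"
    using f by (auto simp: pointed_maps_def)
  obtain N where N: "finite N" "f ` topspace K \<subseteq> contraction_domain N"
    using compactin_metric_wedge_in_contraction_domain[OF image_compactin[OF K[unfolded compact_space_def] fc]]
    by blast
  then have fD: "continuous_map K (subtopology (mtopology_of MW) (contraction_domain N)) f"
    using fc by (simp add: continuous_map_in_subtopology image_subset_iff_funcset)
  let ?g = "contract_outside N 1 \<circ> f"
  have "?g \<in> pointed_maps K k0 WW None"
    using continuous_map_compose[OF fD continuous_map_contract_outside_weak_wedge[OF N(1)]] fk0
    by (simp add: pointed_maps_def)
  moreover have "homotopic_with (\<lambda>h. h k0 = None) K (mtopology_of MW) (id \<circ> f) ?g"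
    by (rule homotopic_with_compose_continuous_map_right[OF homotopic_contract_outside fD])
      (simp add: fk0)
  ultimately show ?thesis
    by (auto simp: pointed_homotopic_def homotopic_with_sym)
qed

lemma pointed_homotopic_weak_wedge_if_metric_wedge:
  assumes K: "compact_space K" and k0: "k0 \<in> topspace K"
    and f: "f \<in> pointed_maps K k0 WW None" and g: "g \<in> pointed_maps K k0 WW None"
    and hom: "pointed_homotopic K k0 (mtopology_of MW) None f g"
  shows "pointed_homotopic K k0 WW None f g"
proof -
  let ?IK = "prod_topology (top_of_set {0..1::real}) K"
  obtain H where H: "continuous_map ?IK (mtopology_of MW) H"
    and H01: "\<And>k. H (0, k) = f k" "\<And>k. H (1, k) = g k"
    and Hk0: "\<And>t. t \<in> {0..1} \<Longrightarrow> H (t, k0) = None"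
    using hom unfolding pointed_homotopic_def homotopic_with_def by auto
  have "compact_space (top_of_set {0..1::real})"
    by (simp add: compact_space_subtopology)
  then have "compact_space ?IK"
    using K by (simp add: compact_space_prod_topology)
  then have "compactin ?IK (topspace ?IK)"
    by (simp add: compact_space_def)
  then obtain N1 where N1: "finite N1" "H ` topspace ?IK \<subseteq> contraction_domain N1"
    using compactin_metric_wedge_in_contraction_domain image_compactin[OF _ H] by blast
  have compact_image: "compactin WW (h ` topspace K)" if "h \<in> pointed_maps K k0 WW None" for h
    using that K image_compactin[of K "topspace K" WW h] by (simp add: pointed_maps_def compact_space_def)
  obtain N2 where N2: "finite N2" "f ` topspace K \<subseteq> wedge_part N2"
    using compactin_weak_wedge_finite_summands[OF compact_image[OF f]] by blast
  obtain N3 where N3: "finite N3" "g ` topspace K \<subseteq> wedge_part N3"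
    using compactin_weak_wedge_finite_summands[OF compact_image[OF g]] by blast
  define N where "N = N1 \<union> N2 \<union> N3"
  have "H ` topspace ?IK \<subseteq> contraction_domain N"
    using N1(2) contraction_domain_mono[of N1 N] by (auto simp: N_def)
  then have "continuous_map ?IK (subtopology (mtopology_of MW) (contraction_domain N)) H"
    using H by (simp add: continuous_map_in_subtopology image_subset_iff_funcset)
  then have "homotopic_with (\<lambda>h. h k0 = None) K (subtopology (mtopology_of MW) (contraction_domain N)) f g"
    unfolding homotopic_with_def using H01 Hk0 by (intro exI[of _ H]) simp
  \<comment> \<open>\<open>contract_outside N 1\<close> pushes the homotopy into finitely many summands, where it is
    continuous for the weak topology, and does not move \<open>f\<close> and \<open>g\<close>.\<close>
  then have contracted: "homotopic_with (\<lambda>h. h k0 = None) K WW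
      (contract_outside N 1 \<circ> f) (contract_outside N 1 \<circ> g)"
    by (rule homotopic_with_compose_continuous_map_left[OF _
          continuous_map_contract_outside_weak_wedge]) (simp_all add: N_def N1 N2 N3)
  have "f ` topspace K \<subseteq> wedge_part N" "g ` topspace K \<subseteq> wedge_part N"
    using N2(2) N3(2) by (auto simp: N_def wedge_part_def)
  then show ?thesis
    unfolding pointed_homotopic_def
    by (intro homotopic_with_eq[OF contracted]) (auto simp: k0 contract_outside_fixes_wedge_part)
qed

end

theorem mainTheorem7:
  fixes m :: "nat \<Rightarrow> 'a metric" and x0 :: "nat \<Rightarrow> 'a" and r :: real
    and K :: "'b topology" and k0 :: 'b
  assumes "r > 0"
    and "\<And>i. x0 i \<in> mspace (m i)"
    and "\<And>i. \<exists>R. strong_deformation_contraction (submetric (m i) (mball_of (m i) (x0 i) r)) (x0 i) R"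
    and "compact_space K" and "k0 \<in> topspace K"
  shows "bij_betw id (topspace (weak_wedge m x0)) (mspace (metric_wedge m x0)) \<and>
         continuous_map (weak_wedge m x0) (mtopology_of (metric_wedge m x0)) id \<and>
         bij_betw (induced_on_classes K k0 (mtopology_of (metric_wedge m x0)) None id)
           (pointed_homotopy_classes K k0 (weak_wedge m x0) None)
           (pointed_homotopy_classes K k0 (mtopology_of (metric_wedge m x0)) None)"
proof -
  obtain R where "\<And>i. strong_deformation_contraction
      (submetric (m i) (mball_of (m i) (x0 i) r)) (x0 i) (R i)"
    using assms(3) by metis
  then interpret wedge_contraction m x0 r R
    using assms(1,2) by unfold_locales
  have "bij_betw (induced_on_classes K k0 (mtopology_of MW) None id)
      (pointed_homotopy_classes K k0 WW None) (pointed_homotopy_classes K k0 (mtopology_of MW) None)"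
    by (rule bij_betw_induced_on_classes[OF continuous_map_weak_wedge_id])
      (simp_all add: metric_wedge_map_homotopic_to_weak_wedge_map
        pointed_homotopic_weak_wedge_if_metric_wedge assms(4,5))
  then show ?thesis
    using continuous_map_weak_wedge_id by simp
qed

end
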